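(* In $\boldsymbol{k}\{\{x,y\}\}$, up to terms of total degree $\ge5$, \begin{align*} \log_l(\exp_l(x)\exp_l(y)) ={}& x+y+\tfrac12[x,y]\\ &+\tfrac1{12}[x,[x,y]]-\tfrac13\langle x;x,y\rangle-\tfrac1{12}[y,[x,y]]-\tfrac16\langle y;x,y\rangle-\tfrac12\Phi(x;y,y)\\ &-\tfrac1{24}\langle x;x,[x,y]\rangle-\tfrac1{12}[x,\langle x;x,y\rangle]-\tfrac18\langle x,x;x,y\rangle\\ &+\tfrac1{24}[[x,[x,y]],y]-\tfrac1{24}[x,\langle y;x,y\rangle]-\tfrac14\Phi(x,x;y,y)-\tfrac14[x,\Phi(x;y,y)]\\ &-\tfrac1{24}[\langle x;x,y\rangle,y]-\tfrac1{24}\langle x;[x,y],y\rangle-\tfrac16\langle x,y;x,y\rangle+\tfrac1{24}\langle y,x;x,y\rangle\\ &+\tfrac1{12}[\Phi(x;y,y),y]+\tfrac1{24}\langle y;y,[x,y]\rangle-\tfrac1{24}\langle y,y;x,y\rangle-\tfrac16\Phi(x;y,y,y). \end{align*}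
   Context: $\boldsymbol{k}$ is a field of characteristic zero; $\boldsymbol{k}\{\{x,y\}\}$ is the unital algebra of formal power series in two non-associative variables. Powers are left-normed, $u^n:=((uu)\cdots)u$; $\exp_l(u):=\sum_{n\ge0}u^n/n!$, and $\log_l$ is its inverse (from series with constant term $1$ to series with zero constant term). $[a,b]:=ab-ba$. $\Delta,\epsilon$ are the continuous unital algebra homomorphisms with $x,y$ primitive; Sweedler notation $\Delta(u)=\sum u_{(1)}\otimes u_{(2)}$; left division $\backslash$ is the unique bilinear operation with $\sum u_{(1)}\backslash(u_{(2)}v)=\epsilon(u)v=\sum u_{(1)}(u_{(2)}\backslash v)$. Associator $(a,b,c):=(ab)c-a(bc)$. For $\underline{x}:=((x_1x_2)\cdots)x_m$, $\underline{y}:=((y_1y_2)\cdots)y_n$, $p(x_1,\dots,x_m;y_1,\dots,y_n;z):=\sum(\underline{x}_{(1)}\underline{y}_{(1)})\backslash(\underline{x}_{(2)},\underline{y}_{(2)},z)$ (a multilinear non-associative polynomial). For $m\ge1$: $\langle x_1,\dots,x_m;b,c\rangle:=-p(x_1,\dots,x_m;b;c)+p(x_1,\dots,x_m;c;b)$. For $m,n\ge1$: $\Phi(x_1,\dots,x_m;y_1,\dots,y_n;y_{n+1}):=\frac{1}{m!(n+1)!}\sum_{\sigma\in S_m,\,\tau\in S_{n+1}}p(x_{\sigma(1)},\dots,x_{\sigma(m)};y_{\tau(1)},\dots,y_{\tau(n)};y_{\tau(n+1)})$; in the formula, $\Phi(x;y,y)$ means $\Phi(x;y;y)$, $\Phi(x,x;y,y)$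 means $\Phi(x,x;y;y)$ and $\Phi(x;y,y,y)$ means $\Phi(x;y,y;y)$. *)

theory Defs
  imports "HOL-Combinatorics.Permutations"
begin

datatype 'g mag = Leaf 'g | Node "'g mag" "'g mag"

text \<open>A word is either the empty word (None, the unit) or a nonempty binary tree.\<close>
type_synonym 'g word = "'g mag option"

fun wmul :: "'g word \<Rightarrow> 'g word \<Rightarrow> 'g word" where
  "wmul None v = v"
| "wmul u None = u"
| "wmul (Some a) (Some b) = Some (Node a b)"

fun nleaves :: "'g mag \<Rightarrow> nat" where
  "nleaves (Leaf g) = 1"
| "nleaves (Node a b) = nleaves a + nleaves b"

definition wdeg :: "'g word \<Rightarrow> nat" where
  "wdeg w = (case w of None \<Rightarrow> 0 | Some t \<Rightarrow> nleaves t)"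

section \<open>Coproduct: the unital algebra homomorphism with generators primitive\<close>

fun copt :: "'g mag \<Rightarrow> ('g word \<times> 'g word) list" where
  "copt (Leaf g) = [(Some (Leaf g), None), (None, Some (Leaf g))]"
| "copt (Node a b) = concat (map (\<lambda>(a1,a2). map (\<lambda>(b1,b2). (wmul a1 b1, wmul a2 b2)) (copt b)) (copt a))"

definition cop :: "'g word \<Rightarrow> ('g word \<times> 'g word) list" where
  "cop w = (case w of None \<Rightarrow> [(None, None)] | Some t \<Rightarrow> copt t)"

lemma wdeg_wmul: "wdeg (wmul a b) = wdeg a + wdeg b"
  by (cases a; cases b) (auto simp: wdeg_def)

lemma nleaves_pos: "0 < nleaves t"
  by (induction t) auto

lemma copt_deg: "(u1,u2) \<in> set (copt t) \<Longrightarrow> wdeg u1 + wdeg u2 = nleaves t"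
proof (induction t arbitrary: u1 u2)
  case (Leaf g) then show ?case by (auto simp: wdeg_def)
next
  case (Node a b)
  then obtain a1 a2 b1 b2 where "(a1,a2) \<in> set (copt a)" "(b1,b2) \<in> set (copt b)"
    "u1 = wmul a1 b1" "u2 = wmul a2 b2" by auto
  then have "wdeg a1 + wdeg a2 = nleaves a" "wdeg b1 + wdeg b2 = nleaves b"
    using Node.IH by auto
  with \<open>u1 = wmul a1 b1\<close> \<open>u2 = wmul a2 b2\<close> show ?case by (simp add: wdeg_wmul)
qed

lemma cop_deg: "(u1,u2) \<in> set (cop (Some t)) \<Longrightarrow> wdeg u1 + wdeg u2 = wdeg (Some t)"
  using copt_deg by (force simp: cop_def wdeg_def)

type_synonym ('a,'g) lc = "('a \<times> 'g word) list"

text \<open>Left division of words, from the identity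
  sum u_(1) \ (u_(2) v) = eps(u) v: the term with u_(2) = 1 is u \ v itself.\<close>
function ldivw :: "'g word \<Rightarrow> 'g word \<Rightarrow> ('a::comm_ring_1, 'g) lc" where
  "ldivw u w = (if u = None then [(1, w)] else
     concat (map (\<lambda>(u1,u2). map (\<lambda>(c,v). (- c, v)) (ldivw u1 (wmul u2 w)))
               (filter (\<lambda>(u1,u2). u2 \<noteq> None) (cop u))))"
  by pat_completeness auto
termination
proof (relation "measure (\<lambda>(u,w). wdeg u)", simp)
  fix u w x u1 u2
  assume "u \<noteq> (None :: 'g word)" "x \<in> set (filter (\<lambda>(u1,u2). u2 \<noteq> None) (cop u))" "(u1,u2) = x"
  then obtain t where t: "u = Some t" "(u1,u2) \<in> set (cop (Some t))" "u2 \<noteq> None" by auto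
  from t(3) obtain y where "u2 = Some y" by auto
  with cop_deg[OF t(2)] nleaves_pos[of y] have "wdeg u1 < wdeg (Some t)" by (simp add: wdeg_def)
  then show "((u1, wmul u2 w), u, w) \<in> measure (\<lambda>(u,w). wdeg u)" using t by simp
qed

definition lc_mul :: "('a::comm_ring_1,'g) lc \<Rightarrow> ('a,'g) lc \<Rightarrow> ('a,'g) lc" where
  "lc_mul xs ys = concat (map (\<lambda>(c,u). map (\<lambda>(d,v). (c * d, wmul u v)) ys) xs)"

definition lc_neg :: "('a::comm_ring_1,'g) lc \<Rightarrow> ('a,'g) lc" where
  "lc_neg xs = map (\<lambda>(c,u). (- c, u)) xs"

definition lc_ldiv :: "('a::comm_ring_1,'g) lc \<Rightarrow> ('a,'g) lc \<Rightarrow> ('a,'g) lc" where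
  "lc_ldiv xs ys = concat (map (\<lambda>(c,u). concat (map (\<lambda>(d,v).
       map (\<lambda>(e,w). (c * d * e, w)) (ldivw u v)) ys)) xs)"

definition lc_assoc :: "('a::comm_ring_1,'g) lc \<Rightarrow> ('a,'g) lc \<Rightarrow> ('a,'g) lc \<Rightarrow> ('a,'g) lc" where
  "lc_assoc a b c = lc_mul (lc_mul a b) c @ lc_neg (lc_mul a (lc_mul b c))"

definition lnorm :: "'g list \<Rightarrow> 'g word" where
  "lnorm gs = foldl (\<lambda>acc g. wmul acc (Some (Leaf g))) None gs"

text \<open>The multilinear polynomial p(x_1..x_m; y_1..y_n; z) in the generators
  x_i = i-1 (i = 1..m), y_j = m+j-1 (j = 1..n), z = m+n.\<close>
definition p_poly :: "nat \<Rightarrow> nat \<Rightarrow> ('a::comm_ring_1, nat) lc" where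
  "p_poly m n = concat (map (\<lambda>(a1,a2). concat (map (\<lambda>(b1,b2).
      lc_ldiv [(1, wmul a1 b1)] (lc_assoc [(1, a2)] [(1, b2)] [(1, Some (Leaf (m + n)))]))
      (cop (lnorm [m..<m+n])))) (cop (lnorm [0..<m])))"

type_synonym ('a,'g) ser = "'g word \<Rightarrow> 'a"

definition smul :: "('a::comm_ring_1,'g) ser \<Rightarrow> ('a,'g) ser \<Rightarrow> ('a,'g) ser" where
  "smul f g w = (case w of None \<Rightarrow> f None * g None
     | Some t \<Rightarrow> f None * g w + f w * g None
         + (case t of Leaf _ \<Rightarrow> 0 | Node a b \<Rightarrow> f (Some a) * g (Some b)))"

definition sone :: "('a::comm_ring_1,'g) ser" where
  "sone w = (if w = None then 1 else 0)"

definition sgen :: "'g \<Rightarrow> ('a::comm_ring_1,'g) ser" where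
  "sgen g w = (if w = Some (Leaf g) then 1 else 0)"

definition slin :: "('a::comm_ring_1 \<times> ('a,'g) ser) list \<Rightarrow> ('a,'g) ser" where
  "slin l w = sum_list (map (\<lambda>(c,f). c * f w) l)"

definition scomm :: "('a::comm_ring_1,'g) ser \<Rightarrow> ('a,'g) ser \<Rightarrow> ('a,'g) ser" where
  "scomm f g = slin [(1, smul f g), (-1, smul g f)]"

fun lpow :: "('a::comm_ring_1,'g) ser \<Rightarrow> nat \<Rightarrow> ('a,'g) ser" where
  "lpow f 0 = sone"
| "lpow f (Suc n) = smul (lpow f n) f"

text \<open>exp_l(u) = sum u^n/n! for u with zero constant term; the coefficient of a word
  of degree d only receives contributions from n \<le> d.\<close>
definition exp_l :: "('a::field,'g) ser \<Rightarrow> ('a,'g) ser" where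
  "exp_l f w = (\<Sum>n\<le>wdeg w. lpow f n w / of_nat (fact n))"

definition log_l :: "('a::field,'g) ser \<Rightarrow> ('a,'g) ser" where
  "log_l g = (THE f. f None = 0 \<and> exp_l f = g)"

fun evtree :: "('g \<Rightarrow> ('a::comm_ring_1,'h) ser) \<Rightarrow> 'g mag \<Rightarrow> ('a,'h) ser" where
  "evtree \<phi> (Leaf g) = \<phi> g"
| "evtree \<phi> (Node a b) = smul (evtree \<phi> a) (evtree \<phi> b)"

definition evword :: "('g \<Rightarrow> ('a::comm_ring_1,'h) ser) \<Rightarrow> 'g word \<Rightarrow> ('a,'h) ser" where
  "evword \<phi> w = (case w of None \<Rightarrow> sone | Some t \<Rightarrow> evtree \<phi> t)"

definition lc_eval :: "('g \<Rightarrow> ('a::comm_ring_1,'h) ser) \<Rightarrow> ('a,'g) lc \<Rightarrow> ('a,'h) ser" where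
  "lc_eval \<phi> xs = slin (map (\<lambda>(c,w). (c, evword \<phi> w)) xs)"

definition pval :: "('a::comm_ring_1,'h) ser list \<Rightarrow> ('a,'h) ser list \<Rightarrow> ('a,'h) ser \<Rightarrow> ('a,'h) ser" where
  "pval xs ys z = lc_eval
     (\<lambda>g. if g < length xs then xs ! g
          else if g < length xs + length ys then ys ! (g - length xs) else z)
     (p_poly (length xs) (length ys))"

definition angle :: "('a::comm_ring_1,'h) ser list \<Rightarrow> ('a,'h) ser \<Rightarrow> ('a,'h) ser \<Rightarrow> ('a,'h) ser" where
  "angle xs b c = slin [(-1, pval xs [b] c), (1, pval xs [c] b)]"

text \<open>Phi xs ys with xs = [x_1..x_m], ys = [y_1..y_{n+1}] (the last entry is y_{n+1}).\<close>
definition Phi :: "('a::field,'h) ser list \<Rightarrow> ('a,'h) ser list \<Rightarrow> ('a,'h) ser" where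
  "Phi xs ys w = (\<Sum>\<sigma>\<in>{\<sigma>. \<sigma> permutes {..<length xs}}. \<Sum>\<tau>\<in>{\<tau>. \<tau> permutes {..<length ys}}.
       pval (map (\<lambda>i. xs ! \<sigma> i) [0..<length xs])
            (map (\<lambda>j. ys ! \<tau> j) [0..<length ys - 1])
            (ys ! \<tau> (length ys - 1)) w)
     / (of_nat (fact (length xs)) * of_nat (fact (length ys)))"

definition sX :: "('a::comm_ring_1, bool) ser" where "sX = sgen False"
definition sY :: "('a::comm_ring_1, bool) ser" where "sY = sgen True"

end

theory Submission
  imports Defs
begin

text \<open>The exponential is triangular: the coefficient of a word \<open>w\<close> in \<open>exp_l f\<close> is
  \<open>f w\<close> plus a polynomial in the coefficients of \<open>f\<close> on strictly shorter words. Hence \<open>exp_l\<close>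
  is injective modulo terms of any given degree, \<open>log_l\<close> exists, and it suffices to exhibit a
  finitely supported series whose exponential agrees with \<open>exp_l x exp_l y\<close> up to degree four.
  That check, and the identification of this series with the right-hand side once the polynomials
  \<open>p\<close> behind the angle brackets and \<open>\<Phi>\<close> have been written with associators, are finite
  computations with sorted linear combinations of words.\<close>

definition agree_upto :: "nat \<Rightarrow> ('a, 'g) ser \<Rightarrow> ('a, 'g) ser \<Rightarrow> bool" where
  "agree_upto d f g \<longleftrightarrow> (\<forall>w. wdeg w \<le> d \<longrightarrow> f w = g w)"

lemma agree_uptoD: "agree_upto d f g \<Longrightarrow> wdeg w \<le> d \<Longrightarrow> f w = g w"
  by (simp add: agree_upto_def)

lemma agree_upto_refl: "agree_upto d f f"
  by (simp add: agree_upto_def)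

lemma agree_upto_sym: "agree_upto d f g \<Longrightarrow> agree_upto d g f"
  by (simp add: agree_upto_def)

lemma agree_upto_trans [trans]: "agree_upto d f g \<Longrightarrow> agree_upto d g h \<Longrightarrow> agree_upto d f h"
  by (simp add: agree_upto_def)

lemma agree_upto_mono: "agree_upto d f g \<Longrightarrow> d' \<le> d \<Longrightarrow> agree_upto d' f g"
  by (simp add: agree_upto_def)

lemma wdeg_None [simp]: "wdeg None = 0"
  by (simp add: wdeg_def)

lemma wdeg_Leaf [simp]: "wdeg (Some (Leaf g)) = 1"
  by (simp add: wdeg_def)

lemma wdeg_Node [simp]: "wdeg (Some (Node a b)) = wdeg (Some a) + wdeg (Some b)"
  by (simp add: wdeg_def)

lemma wdeg_Some_pos: "0 < wdeg (Some t)"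
  by (simp add: wdeg_def nleaves_pos)

lemma wdeg_eq_0_iff: "wdeg w = 0 \<longleftrightarrow> w = None"
  using nleaves_pos by (auto simp: wdeg_def split: option.split)

lemma word_exhaust [case_names None Leaf Node]:
  obtains "w = None" | x where "w = Some (Leaf x)" | a b where "w = Some (Node a b)"
  by (metis mag.exhaust option.exhaust)

lemma smul_apply:
  "smul f g None = f None * g None"
  "smul f g (Some (Leaf x)) = f None * g (Some (Leaf x)) + f (Some (Leaf x)) * g None"
  "smul f g (Some (Node a b)) =
     f None * g (Some (Node a b)) + f (Some (Node a b)) * g None + f (Some a) * g (Some b)"
  by (simp_all add: smul_def)

lemma smul_agree_upto:
  fixes f1 f2 g1 g2 :: "('a::comm_ring_1, 'g) ser"
  assumes "agree_upto d f1 f2" and "agree_upto d g1 g2"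
  shows "agree_upto d (smul f1 g1) (smul f2 g2)"
  unfolding agree_upto_def
proof (intro allI impI)
  fix w :: "'g word"
  assume "wdeg w \<le> d"
  with assms show "smul f1 g1 w = smul f2 g2 w"
    by (cases w rule: word_exhaust) (auto simp: smul_apply agree_upto_def)
qed

section \<open>Exponential and logarithm\<close>

lemma smul_sone_left [simp]: "smul sone f = f"
  by (rule ext) (simp add: smul_def sone_def split: option.split mag.split)

lemma lpow_agree_upto: "agree_upto d f g \<Longrightarrow> agree_upto d (lpow f n) (lpow g n)"
  by (induction n) (simp_all add: agree_upto_refl smul_agree_upto)

lemma lpow_vanishes:
  assumes "f None = 0" and "wdeg w < n"
  shows "lpow f n w = 0"
  using assms(2)
proof (induction n arbitrary: w)
  case 0
  then show ?case by simp
next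
  case (Suc n)
  show ?case
  proof (cases w)
    case None
    then show ?thesis by (simp add: smul_apply assms(1))
  next
    case (Some t)
    show ?thesis
    proof (cases t)
      case (Leaf x)
      then show ?thesis
        using Suc Some by (simp add: smul_apply assms(1))
    next
      case (Node a b)
      have "wdeg (Some a) < n" "0 < n"
        using Suc.prems Some Node wdeg_Some_pos[of a] wdeg_Some_pos[of b] by simp_all
      then show ?thesis
        using Suc.IH Some Node by (simp add: smul_apply assms(1))
    qed
  qed
qed

lemma lpow_Suc_Suc_agree:
  assumes "f None = 0" "g None = 0" "agree_upto d f g" "wdeg w \<le> Suc d"
  shows "lpow f (Suc (Suc n)) w = lpow g (Suc (Suc n)) w"
proof (cases "wdeg w < 2")
  case True
  then show ?thesis
    using lpow_vanishes[of f w "Suc (Suc n)"] lpow_vanishes[of g w "Suc (Suc n)"] assms(1,2)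
    by (simp del: lpow.simps)
next
  case False
  then obtain a b where w: "w = Some (Node a b)"
    by (cases w rule: word_exhaust) auto
  have "wdeg (Some a) \<le> d" "wdeg (Some b) \<le> d"
    using assms(4) w wdeg_Some_pos[of a] wdeg_Some_pos[of b] by simp_all
  then have "lpow f (Suc n) (Some a) = lpow g (Suc n) (Some a)" "f (Some b) = g (Some b)"
    using agree_uptoD[OF lpow_agree_upto[OF assms(3)]] agree_uptoD[OF assms(3)] by blast+
  moreover have "lpow f (Suc n) None = 0" "lpow g (Suc n) None = 0"
    using lpow_vanishes[of f None "Suc n"] lpow_vanishes[of g None "Suc n"] assms(1,2) by simp_all
  ultimately show ?thesis
    using assms(1,2) by (simp only: w lpow.simps(2)[of _ "Suc n"] smul_apply) simp
qed

definition exp_rest :: "('a::field, 'g) ser \<Rightarrow> ('a, 'g) ser" where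
  "exp_rest f w = (\<Sum>n\<in>{..wdeg w} - {1}. lpow f n w / of_nat (fact n))"

lemma exp_l_split:
  assumes "f None = 0"
  shows "exp_l f w = f w + exp_rest f w"
proof (cases "w = None")
  case True
  then show ?thesis
    using assms by (simp add: exp_l_def exp_rest_def sone_def)
next
  case False
  then have "1 \<in> {..wdeg w}"
    using wdeg_eq_0_iff[of w] by auto
  then show ?thesis
    by (simp add: exp_l_def exp_rest_def sum.remove)
qed

lemma exp_rest_agree:
  assumes "f None = 0" "g None = 0" "agree_upto d f g" "wdeg w \<le> Suc d"
  shows "exp_rest f w = exp_rest g w"
  unfolding exp_rest_def
proof (rule sum.cong)
  fix n
  assume "n \<in> {..wdeg w} - {1}"
  then consider "n = 0" | m where "n = Suc (Suc m)"
    by (cases n; cases "n - 1") auto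
  then show "lpow f n w / of_nat (fact n) = lpow g n w / of_nat (fact n)"
    by cases (simp_all only: lpow.simps(1) lpow_Suc_Suc_agree[OF assms])
qed simp

lemma agree_upto_exp_l_cancel:
  assumes "f None = 0" "g None = 0" "agree_upto d (exp_l f) (exp_l g)"
  shows "agree_upto d f g"
  using assms(3)
proof (induction d)
  case 0
  then show ?case
    using assms(1,2) by (simp add: agree_upto_def wdeg_eq_0_iff)
next
  case (Suc d)
  have below: "agree_upto d f g"
    using Suc.IH agree_upto_mono[OF Suc.prems] by simp
  show ?case
    unfolding agree_upto_def
  proof (intro allI impI)
    fix w :: "'b word"
    assume "wdeg w \<le> Suc d"
    then show "f w = g w"
      using agree_uptoD[OF Suc.prems] exp_rest_agree[OF assms(1,2) below]
        exp_l_split[of f w, OF assms(1)] exp_l_split[of g w, OF assms(2)]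
      by simp
  qed
qed

text \<open>Solving \<open>exp_l f = g\<close> for \<open>f\<close> degree by degree. Cutting the recursive call off at
  shorter words makes the recursion well-founded and, by \<open>exp_rest_agree\<close>, does not change
  \<open>exp_rest\<close>.\<close>

function log_rec :: "('a::field, 'g) ser \<Rightarrow> ('a, 'g) ser" where
  "log_rec g w = (if w = None then 0
     else g w - exp_rest (\<lambda>v. if wdeg v < wdeg w then log_rec g v else 0) w)"
  by auto
termination
  by (relation "measure (\<lambda>(g, w). wdeg w)") auto

declare log_rec.simps [simp del]

lemma exp_l_log_rec:
  assumes "g None = 1"
  shows "exp_l (log_rec g) = g"
proof
  fix w
  show "exp_l (log_rec g) w = g w"
  proof (cases "w = None")
    case True
    then show ?thesis
      using assms by (simp add: exp_l_def sone_def)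
  next
    case False
    let ?h = "\<lambda>v. if wdeg v < wdeg w then log_rec g v else 0"
    have w_pos: "0 < wdeg w"
      using False wdeg_eq_0_iff by blast
    have log_None: "log_rec g None = 0"
      by (simp add: log_rec.simps)
    have "agree_upto (wdeg w - 1) (log_rec g) ?h"
      using w_pos by (auto simp: agree_upto_def)
    moreover have "?h None = 0"
      using w_pos log_None by simp
    ultimately have "exp_rest (log_rec g) w = exp_rest ?h w"
      using exp_rest_agree[of "log_rec g" ?h, OF log_None] w_pos by simp
    moreover have "log_rec g w = g w - exp_rest ?h w"
      using False by (simp add: log_rec.simps[of g w] del: not_None_eq)
    ultimately show ?thesis
      using exp_l_split[of "log_rec g" w, OF log_None] by simp
  qed
qed

lemma log_l_spec:
  fixes g :: "('a::field, 'g) ser"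
  assumes "g None = 1"
  shows "log_l g None = 0" and "exp_l (log_l g) = g"
proof -
  have unique: "f1 = f2" if "f1 None = 0" "exp_l f1 = g" "f2 None = 0" "exp_l f2 = g" for f1 f2
  proof
    fix w :: "'g word"
    have "agree_upto (wdeg w) f1 f2"
      by (rule agree_upto_exp_l_cancel) (use that in \<open>simp_all add: agree_upto_def\<close>)
    then show "f1 w = f2 w"
      by (simp add: agree_upto_def)
  qed
  have "\<exists>!f. f None = 0 \<and> exp_l f = g"
    using exp_l_log_rec[of g, OF assms] unique
    by (intro ex1I[of _ "log_rec g"]) (auto simp: log_rec.simps)
  then have "log_l g None = 0 \<and> exp_l (log_l g) = g"
    unfolding log_l_def by (rule theI')
  then show "log_l g None = 0" and "exp_l (log_l g) = g"
    by simp_all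
qed

lemma log_l_agree_upto:
  assumes "g None = 1" "f None = 0" "agree_upto d (exp_l f) g"
  shows "agree_upto d (log_l g) f"
  by (rule agree_upto_exp_l_cancel)
    (use log_l_spec[of g, OF assms(1)] assms(2) agree_upto_sym[OF assms(3)] in simp_all)

section \<open>Finitely supported series\<close>

definition series_of :: "('a::comm_ring_1, 'g) lc \<Rightarrow> ('a, 'g) ser" where
  "series_of L w = sum_list (map (\<lambda>(c, u). if u = w then c else 0) L)"

lemma series_of_Nil: "series_of [] = (\<lambda>w. 0)"
  by (simp add: series_of_def fun_eq_iff)

lemma series_of_Cons: "series_of ((c, u) # L) = (\<lambda>w. (if u = w then c else 0) + series_of L w)"
  by (simp add: series_of_def fun_eq_iff)

lemma series_of_Cons_split: "series_of (p # L) = (\<lambda>w. series_of [p] w + series_of L w)"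
  by (cases p) (simp add: series_of_def fun_eq_iff)

lemma sone_eq_series_of: "sone = series_of [(1, None)]"
  by (simp add: sone_def series_of_def fun_eq_iff)

lemma sgen_eq_series_of: "sgen g = series_of [(1, Some (Leaf g))]"
  by (simp add: sgen_def series_of_def fun_eq_iff)

definition lc_drop_zeros :: "('a::comm_ring_1, 'g) lc \<Rightarrow> ('a, 'g) lc" where
  "lc_drop_zeros L = filter (\<lambda>(c, u). c \<noteq> 0) L"

lemma series_of_lc_drop_zeros [simp]: "series_of (lc_drop_zeros L) = series_of L"
  by (induction L) (auto simp: lc_drop_zeros_def series_of_Nil series_of_Cons)

definition lc_scale :: "'a::comm_ring_1 \<Rightarrow> ('a, 'g) lc \<Rightarrow> ('a, 'g) lc" where
  "lc_scale c L = map (\<lambda>(e, u). (c * e, u)) L"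

lemma series_of_lc_scale: "series_of (lc_scale c L) w = c * series_of L w"
  by (induction L) (auto simp: lc_scale_def series_of_Nil series_of_Cons algebra_simps)

text \<open>Lists are kept sorted for the order below, so that sums can be formed by merging and equal
  series get equal normal forms; no correctness statement depends on sortedness. Evaluating
  \<open>lc_merge\<close> by simplification needs \<open>if_weak_cong\<close>, otherwise the recursive calls in the
  branches not taken are evaluated as well.\<close>

fun mag_less :: "'g::linorder mag \<Rightarrow> 'g mag \<Rightarrow> bool" where
  "mag_less (Leaf a) (Leaf b) = (a < b)"
| "mag_less (Leaf a) (Node c d) = True"
| "mag_less (Node a b) (Leaf c) = False"
| "mag_less (Node a b) (Node c d) = (mag_less a c \<or> a = c \<and> mag_less b d)"

fun word_less :: "'g::linorder word \<Rightarrow> 'g word \<Rightarrow> bool" where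
  "word_less None v = (v \<noteq> None)"
| "word_less (Some a) None = False"
| "word_less (Some a) (Some b) = mag_less a b"

fun lc_merge :: "('a::comm_ring_1, 'g::linorder) lc \<Rightarrow> ('a, 'g) lc \<Rightarrow> ('a, 'g) lc" where
  "lc_merge [] M = M"
| "lc_merge L [] = L"
| "lc_merge ((c, u) # L) ((e, v) # M) =
     (if u = v then (c + e, u) # lc_merge L M
      else if word_less u v then (c, u) # lc_merge L ((e, v) # M)
      else (e, v) # lc_merge ((c, u) # L) M)"

lemma series_of_lc_merge: "series_of (lc_merge A B) w = series_of A w + series_of B w"
  by (induction A B rule: lc_merge.induct) (auto simp: series_of_Nil series_of_Cons)

fun merge_pairs :: "('a::comm_ring_1, 'g::linorder) lc list \<Rightarrow> ('a, 'g) lc list" where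
  "merge_pairs (A # B # Ls) = lc_merge A B # merge_pairs Ls"
| "merge_pairs Ls = Ls"

lemma length_merge_pairs: "length (merge_pairs Ls) = (length Ls + 1) div 2"
  by (induction Ls rule: merge_pairs.induct) auto

lemma series_of_merge_pairs:
  "(\<Sum>L\<leftarrow>merge_pairs Ls. series_of L w) = (\<Sum>L\<leftarrow>Ls. series_of L w)"
  by (induction Ls rule: merge_pairs.induct) (auto simp: series_of_lc_merge)

function merge_all :: "('a::comm_ring_1, 'g::linorder) lc list \<Rightarrow> ('a, 'g) lc" where
  "merge_all [] = []"
| "merge_all [A] = A"
| "merge_all (A # B # Ls) = merge_all (merge_pairs (A # B # Ls))"
  by pat_completeness auto
termination
  by (relation "measure length") (auto simp: length_merge_pairs)

lemma series_of_merge_all: "series_of (merge_all Ls) w = (\<Sum>L\<leftarrow>Ls. series_of L w)"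
proof (induction Ls rule: merge_all.induct)
  case (3 A B Ls)
  then show ?case
    by (simp only: merge_all.simps(3) series_of_merge_pairs)
qed (simp_all add: series_of_Nil)

definition lc_nf :: "('a::comm_ring_1, 'g::linorder) lc \<Rightarrow> ('a, 'g) lc" where
  "lc_nf L = lc_drop_zeros (merge_all (map (\<lambda>p. [p]) L))"

lemma series_of_lc_nf: "series_of (lc_nf L) = series_of L"
proof
  fix w
  have "series_of (lc_nf L) w = (\<Sum>p\<leftarrow>L. series_of [p] w)"
    by (simp add: lc_nf_def series_of_merge_all comp_def)
  also have "\<dots> = series_of L w"
    by (induction L) (auto simp: series_of_Nil series_of_Cons)
  finally show "series_of (lc_nf L) w = series_of L w" .
qed

definition sadd :: "('a::comm_ring_1, 'g) ser \<Rightarrow> ('a, 'g) ser \<Rightarrow> ('a, 'g) ser" where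
  "sadd f g w = f w + g w"

definition sscale :: "'a::comm_ring_1 \<Rightarrow> ('a, 'g) ser \<Rightarrow> ('a, 'g) ser" where
  "sscale c f w = c * f w"

lemma slin_Nil: "slin [] = series_of []"
  by (simp add: slin_def series_of_Nil fun_eq_iff)

lemma slin_Cons: "slin ((c, f) # l) = sadd (sscale c f) (slin l)"
  by (simp add: slin_def sadd_def sscale_def fun_eq_iff)

definition lc_add :: "('a::comm_ring_1, 'g::linorder) lc \<Rightarrow> ('a, 'g) lc \<Rightarrow> ('a, 'g) lc" where
  "lc_add A B = lc_drop_zeros (lc_merge A B)"

lemma sadd_series_of: "sadd (series_of A) (series_of B) = series_of (lc_add A B)"
  by (simp add: sadd_def lc_add_def series_of_lc_merge fun_eq_iff)

lemma sscale_series_of: "sscale c (series_of A) = series_of (lc_scale c A)"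
  by (simp add: sscale_def series_of_lc_scale fun_eq_iff)

lemma smul_add_left: "smul (\<lambda>w. f1 w + f2 w) g = (\<lambda>w. smul f1 g w + smul f2 g w)"
  by (rule ext) (simp add: smul_def algebra_simps split: option.split mag.split)

lemma smul_add_right: "smul f (\<lambda>w. g1 w + g2 w) = (\<lambda>w. smul f g1 w + smul f g2 w)"
  by (rule ext) (simp add: smul_def algebra_simps split: option.split mag.split)

lemma smul_zero_left: "smul (\<lambda>w. 0) g = (\<lambda>w. 0)"
  by (rule ext) (simp add: smul_def split: option.split mag.split)

lemma smul_zero_right: "smul f (\<lambda>w. 0) = (\<lambda>w. 0)"
  by (rule ext) (simp add: smul_def split: option.split mag.split)

lemma smul_monomials:
  "smul (series_of [(c, u)]) (series_of [(e, v)]) = series_of [(c * e, wmul u v)]"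
  by (rule ext, cases u rule: word_exhaust; cases v rule: word_exhaust)
    (auto simp: smul_def series_of_Cons series_of_Nil split: option.split mag.split)

lemma smul_monomial_left:
  "smul (series_of [(c, u)]) (series_of M) = series_of (map (\<lambda>(e, v). (c * e, wmul u v)) M)"
proof (induction M)
  case Nil
  then show ?case by (simp add: series_of_Nil smul_zero_right)
next
  case (Cons p M)
  obtain e v where p: "p = (e, v)" by fastforce
  show ?case
    by (simp only: p list.map prod.case series_of_Cons_split[of "(e, v)" M]
        series_of_Cons_split[of "(c * e, wmul u v)" "map (\<lambda>(e, v). (c * e, wmul u v)) M"]
        smul_add_right Cons.IH smul_monomials)
qed

lemma smul_sum_left:
  "smul (series_of L) g w = (\<Sum>(c, u)\<leftarrow>L. smul (series_of [(c, u)]) g w)"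
proof (induction L)
  case Nil
  then show ?case by (simp add: series_of_Nil smul_zero_left)
next
  case (Cons p L)
  obtain c u where "p = (c, u)" by fastforce
  then show ?case
    using Cons by (simp add: series_of_Cons[of c u L] series_of_Cons[of c u "[]"]
        series_of_Nil smul_add_left)
qed

lemma series_of_merge_rows:
  "series_of (merge_all (map (\<lambda>(c, u). R c u) L)) w = (\<Sum>(c, u)\<leftarrow>L. series_of (R c u) w)"
  by (induction L) (auto simp: series_of_merge_all series_of_Nil)

definition lc_times :: "('a::comm_ring_1, 'g::linorder) lc \<Rightarrow> ('a, 'g) lc \<Rightarrow> ('a, 'g) lc" where
  "lc_times L M =
     lc_drop_zeros (merge_all (map (\<lambda>(c, u). map (\<lambda>(e, v). (c * e, wmul u v)) M) L))"

lemma smul_series_of: "smul (series_of L) (series_of M) = series_of (lc_times L M)"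
  by (rule ext) (simp add: lc_times_def series_of_merge_rows smul_sum_left smul_monomial_left)

definition lc_times_upto :: "nat \<Rightarrow> ('a::comm_ring_1, 'g::linorder) lc \<Rightarrow> ('a, 'g) lc \<Rightarrow> ('a, 'g) lc"
  where "lc_times_upto d L M = lc_drop_zeros (merge_all (map (\<lambda>(c, u).
     [(c * e, wmul u v). (e, v) \<leftarrow> M, wdeg u + wdeg v \<le> d]) L))"

lemma series_of_times_filter:
  "series_of [(c * e, wmul u v). (e, v) \<leftarrow> M, wdeg u + wdeg v \<le> d] w =
     (if wdeg w \<le> d then series_of (map (\<lambda>(e, v). (c * e, wmul u v)) M) w else 0)"
  by (induction M) (auto simp: series_of_Nil series_of_Cons wdeg_wmul)

lemma series_of_lc_times_upto:
  "series_of (lc_times_upto d L M) w =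
     (if wdeg w \<le> d then smul (series_of L) (series_of M) w else 0)"
proof -
  let ?row = "\<lambda>c u. map (\<lambda>(e, v). (c * e, wmul u v)) M"
  have "series_of (lc_times_upto d L M) w =
      (\<Sum>(c, u)\<leftarrow>L. if wdeg w \<le> d then series_of (?row c u) w else 0)"
    by (simp add: lc_times_upto_def series_of_merge_rows series_of_times_filter)
  also have "\<dots> = (if wdeg w \<le> d then \<Sum>(c, u)\<leftarrow>L. series_of (?row c u) w else 0)"
    by (induction L) auto
  finally show ?thesis
    by (simp add: smul_sum_left smul_monomial_left)
qed

fun lc_pow_upto :: "nat \<Rightarrow> ('a::comm_ring_1, 'g::linorder) lc \<Rightarrow> nat \<Rightarrow> ('a, 'g) lc" where
  "lc_pow_upto d L 0 = [(1, None)]"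
| "lc_pow_upto d L (Suc n) = lc_times_upto d (lc_pow_upto d L n) L"

lemma lc_pow_upto_agree: "agree_upto d (series_of (lc_pow_upto d L n)) (lpow (series_of L) n)"
proof (induction n)
  case 0
  show ?case
    by (simp add: sone_eq_series_of agree_upto_refl)
next
  case (Suc n)
  have "agree_upto d (series_of (lc_pow_upto d L (Suc n)))
      (smul (series_of (lc_pow_upto d L n)) (series_of L))"
    by (simp add: agree_upto_def series_of_lc_times_upto)
  also have "agree_upto d \<dots> (lpow (series_of L) (Suc n))"
    using smul_agree_upto[OF Suc.IH agree_upto_refl] by simp
  finally show ?case .
qed

lemma exp_l_eq_sum_upto:
  assumes "f None = 0" and "wdeg w \<le> d"
  shows "exp_l f w = (\<Sum>n\<le>d. lpow f n w / of_nat (fact n))"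
  unfolding exp_l_def
  by (rule sum.mono_neutral_left) (use assms in \<open>auto intro: lpow_vanishes simp: not_le\<close>)

definition lc_exp_upto :: "nat \<Rightarrow> ('a::field, 'g::linorder) lc \<Rightarrow> ('a, 'g) lc" where
  "lc_exp_upto d L = lc_drop_zeros (merge_all
     (map (\<lambda>n. lc_scale (1 / of_nat (fact n)) (lc_pow_upto d (lc_nf L) n)) [0..<Suc d]))"

lemma lc_exp_upto_agree:
  fixes L :: "('a::field, 'g::linorder) lc"
  assumes "series_of L None = 0"
  shows "agree_upto d (series_of (lc_exp_upto d L)) (exp_l (series_of L))"
  unfolding agree_upto_def
proof (intro allI impI)
  fix w :: "'g word"
  assume w: "wdeg w \<le> d"
  have "series_of (lc_exp_upto d L) w =
      (\<Sum>n\<leftarrow>[0..<Suc d]. series_of (lc_pow_upto d (lc_nf L) n) w / of_nat (fact n))"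
    by (simp add: lc_exp_upto_def series_of_merge_all series_of_lc_scale comp_def)
  also have "\<dots> = (\<Sum>n\<leftarrow>[0..<Suc d]. lpow (series_of L) n w / of_nat (fact n))"
    using agree_uptoD[OF lc_pow_upto_agree[of d "lc_nf L"] w] by (simp add: series_of_lc_nf)
  also have "\<dots> = (\<Sum>n\<le>d. lpow (series_of L) n w / of_nat (fact n))"
    by (simp only: sum_set_upt_conv_sum_list_nat[symmetric] set_upt atLeast0LessThan lessThan_Suc_atMost)
  also have "\<dots> = exp_l (series_of L) w"
    using exp_l_eq_sum_upto[of "series_of L", OF assms w] by simp
  finally show "series_of (lc_exp_upto d L) w = exp_l (series_of L) w" .
qed

section \<open>The polynomials \<open>p\<close> in low degree\<close>

declare ldivw.simps [simp del]

lemma ldivw_None: "ldivw None w = [(1, w)]"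
  by (simp add: ldivw.simps)

lemma ldivw_Some:
  "ldivw (Some t) w = concat (map (\<lambda>(u1, u2). map (\<lambda>(c, v). (- c, v)) (ldivw u1 (wmul u2 w)))
     (filter (\<lambda>(u1, u2). u2 \<noteq> None) (copt t)))"
  by (simp add: ldivw.simps cop_def)

lemma lc_eval_eq_sum:
  assumes "finite S" and "snd ` set L \<subseteq> S"
  shows "lc_eval \<phi> L w = (\<Sum>u\<in>S. series_of L u * evword \<phi> u w)"
  using assms(2)
proof (induction L)
  case Nil
  then show ?case by (simp add: lc_eval_def slin_def series_of_Nil)
next
  case (Cons p L)
  obtain c u where p: "p = (c, u)" by fastforce
  with Cons.prems have "u \<in> S" by auto
  have "lc_eval \<phi> (p # L) w = c * evword \<phi> u w + lc_eval \<phi> L w"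
    by (simp add: p lc_eval_def slin_def)
  also have "c * evword \<phi> u w = (\<Sum>v\<in>S. (if u = v then c else 0) * evword \<phi> v w)"
    using \<open>u \<in> S\<close> assms(1)
    by (subst sum.cong[OF refl, of S _ "\<lambda>v. if u = v then c * evword \<phi> v w else 0"]) auto
  finally show ?case
    using Cons by (simp add: p series_of_Cons distrib_right sum.distrib)
qed

lemma lc_eval_lc_nf: "lc_eval \<phi> (lc_nf L) = lc_eval \<phi> L"
proof
  fix w
  let ?S = "snd ` set (lc_nf L) \<union> snd ` set L"
  have "lc_eval \<phi> (lc_nf L) w = (\<Sum>u\<in>?S. series_of (lc_nf L) u * evword \<phi> u w)"
    by (rule lc_eval_eq_sum) auto
  also have "\<dots> = (\<Sum>u\<in>?S. series_of L u * evword \<phi> u w)"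
    by (simp add: series_of_lc_nf)
  also have "\<dots> = lc_eval \<phi> L w"
    by (rule lc_eval_eq_sum[symmetric]) auto
  finally show "lc_eval \<phi> (lc_nf L) w = lc_eval \<phi> L w" .
qed

definition sassoc :: "('a::comm_ring_1, 'g) ser \<Rightarrow> ('a, 'g) ser \<Rightarrow> ('a, 'g) ser \<Rightarrow> ('a, 'g) ser"
  where "sassoc f g h = slin [(1, smul (smul f g) h), (-1, smul f (smul g h))]"

lemma smul_scale_right: "smul f (\<lambda>w. c * g w) = (\<lambda>w. c * smul f g w)"
  by (rule ext) (simp add: smul_def algebra_simps split: option.split mag.split)

lemma smul_slin_right: "smul f (slin l) = slin (map (\<lambda>(c, g). (c, smul f g)) l)"
proof (induction l)
  case Nil
  then show ?case by (simp add: slin_def smul_zero_right)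
next
  case (Cons p l)
  obtain c g where "p = (c, g)" by fastforce
  then show ?case
    using Cons by (simp add: slin_def smul_add_right smul_scale_right)
qed

lemmas p_poly_eval_simps =
  p_poly_def lnorm_def cop_def ldivw_None ldivw_Some lc_ldiv_def lc_assoc_def lc_mul_def lc_neg_def
  lc_eval_def evword_def lc_nf_def lc_drop_zeros_def upt_rec

lemma pval_single: "pval [a] [b] c = sassoc a b c"
  unfolding pval_def
  by (subst lc_eval_lc_nf[symmetric])
    (simp add: p_poly_eval_simps sassoc_def slin_def fun_eq_iff cong: if_weak_cong)

lemma pval_two_left:
  "pval [a1, a2] [b] c =
     slin [(1, sassoc (smul a1 a2) b c), (-1, smul a1 (sassoc a2 b c)), (-1, smul a2 (sassoc a1 b c))]"
  unfolding pval_def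
  by (subst lc_eval_lc_nf[symmetric])
    (simp add: p_poly_eval_simps sassoc_def smul_slin_right slin_def fun_eq_iff cong: if_weak_cong)

lemma pval_two_right:
  "pval [a] [b1, b2] c =
     slin [(1, sassoc a (smul b1 b2) c), (-1, smul b1 (sassoc a b2 c)), (-1, smul b2 (sassoc a b1 c))]"
  unfolding pval_def
  by (subst lc_eval_lc_nf[symmetric])
    (simp add: p_poly_eval_simps sassoc_def smul_slin_right slin_def fun_eq_iff cong: if_weak_cong)

lemma Phi_replicate:
  fixes a b :: "('a::field_char_0, 'h) ser"
  shows "Phi (replicate m a) (replicate (Suc n) b) = pval (replicate m a) (replicate n b) b"
proof
  fix w
  let ?v = "pval (replicate m a) (replicate n b) b w"
  have term_eq: "pval (map (\<lambda>i. replicate m a ! \<sigma> i) [0..<m])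
      (map (\<lambda>j. replicate (Suc n) b ! \<tau> j) [0..<n]) (replicate (Suc n) b ! \<tau> n) w = ?v"
    if "\<sigma> permutes {..<m}" "\<tau> permutes {..<Suc n}" for \<sigma> \<tau>
  proof -
    have \<sigma>: "\<sigma> i < m" if "i < m" for i
      using permutes_in_image[OF \<open>\<sigma> permutes {..<m}\<close>, of i] that by simp
    have \<tau>: "\<tau> j < Suc n" if "j < Suc n" for j
      using permutes_in_image[OF \<open>\<tau> permutes {..<Suc n}\<close>, of j] that by simp
    have "map (\<lambda>i. replicate m a ! \<sigma> i) [0..<m] = replicate m a"
      by (rule nth_equalityI) (simp_all add: \<sigma>)
    moreover have "map (\<lambda>j. replicate (Suc n) b ! \<tau> j) [0..<n] = replicate n b"
      by (rule nth_equalityI) (simp_all add: \<tau> del: replicate_Suc)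
    moreover have "replicate (Suc n) b ! \<tau> n = b"
      by (simp add: \<tau> del: replicate_Suc)
    ultimately show ?thesis by simp
  qed
  have "Phi (replicate m a) (replicate (Suc n) b) w =
      (\<Sum>\<sigma>\<in>{\<sigma>. \<sigma> permutes {..<m}}. \<Sum>\<tau>\<in>{\<tau>. \<tau> permutes {..<Suc n}}. ?v)
        / (of_nat (fact m) * of_nat (fact (Suc n)))"
    unfolding Phi_def length_replicate diff_Suc_1
    by (intro arg_cong2[where f = "(/)"] sum.cong refl) (simp add: term_eq del: replicate_Suc)
  also have "\<dots> = ?v"
    by (simp add: card_permutations del: fact_Suc)
  finally show "Phi (replicate m a) (replicate (Suc n) b) w = ?v" .
qed

section \<open>The series up to degree four\<close>

text \<open>\<open>bch4\<close> lists the coefficients of \<open>log_l (exp_l x exp_l y)\<close> on the words of degree at most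
  four, written with \<open>X\<close>, \<open>Y\<close> for the generators and \<open>\<diamond>\<close> for the product.\<close>

abbreviation X :: "bool mag" where "X \<equiv> Leaf False"
abbreviation Y :: "bool mag" where "Y \<equiv> Leaf True"

notation Node (infixl "\<diamond>" 70)

definition bch4 :: "('a::field_char_0, bool) lc" where
  "bch4 =
    [(1, Some X),
     (1, Some Y),
     (1/2, Some (X \<diamond> Y)),
     (-1/2, Some (Y \<diamond> X)),
     (-1/4, Some (X \<diamond> (X \<diamond> Y))),
     (1/4, Some (X \<diamond> (Y \<diamond> X))),
     (1/2, Some (X \<diamond> (Y \<diamond> Y))),
     (-1/4, Some (Y \<diamond> (X \<diamond> Y))),
     (1/4, Some (Y \<diamond> (Y \<diamond> X))),
     (1/3, Some ((X \<diamond> X) \<diamond> Y)),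
     (-5/12, Some ((X \<diamond> Y) \<diamond> X)),
     (-5/12, Some ((X \<diamond> Y) \<diamond> Y)),
     (1/12, Some ((Y \<diamond> X) \<diamond> X)),
     (1/12, Some ((Y \<diamond> X) \<diamond> Y)),
     (-1/6, Some ((Y \<diamond> Y) \<diamond> X)),
     (1/8, Some (X \<diamond> (X \<diamond> (X \<diamond> Y)))),
     (-1/8, Some (X \<diamond> (X \<diamond> (Y \<diamond> X)))),
     (-1/4, Some (X \<diamond> (X \<diamond> (Y \<diamond> Y)))),
     (1/8, Some (X \<diamond> (Y \<diamond> (X \<diamond> Y)))),
     (-1/8, Some (X \<diamond> (Y \<diamond> (Y \<diamond> X)))),
     (-1/6, Some (X \<diamond> ((X \<diamond> X) \<diamond> Y))),
     (5/24, Some (X \<diamond> ((X \<diamond> Y) \<diamond> X))),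
     (5/24, Some (X \<diamond> ((X \<diamond> Y) \<diamond> Y))),
     (-1/24, Some (X \<diamond> ((Y \<diamond> X) \<diamond> X))),
     (-1/24, Some (X \<diamond> ((Y \<diamond> X) \<diamond> Y))),
     (1/12, Some (X \<diamond> ((Y \<diamond> Y) \<diamond> X))),
     (1/6, Some (X \<diamond> ((Y \<diamond> Y) \<diamond> Y))),
     (1/8, Some (Y \<diamond> (X \<diamond> (X \<diamond> Y)))),
     (-1/8, Some (Y \<diamond> (X \<diamond> (Y \<diamond> X)))),
     (-1/4, Some (Y \<diamond> (X \<diamond> (Y \<diamond> Y)))),
     (1/8, Some (Y \<diamond> (Y \<diamond> (X \<diamond> Y)))),
     (-1/8, Some (Y \<diamond> (Y \<diamond> (Y \<diamond> X)))),
     (-1/6, Some (Y \<diamond> ((X \<diamond> X) \<diamond> Y))),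
     (5/24, Some (Y \<diamond> ((X \<diamond> Y) \<diamond> X))),
     (5/24, Some (Y \<diamond> ((X \<diamond> Y) \<diamond> Y))),
     (-1/24, Some (Y \<diamond> ((Y \<diamond> X) \<diamond> X))),
     (-1/24, Some (Y \<diamond> ((Y \<diamond> X) \<diamond> Y))),
     (1/12, Some (Y \<diamond> ((Y \<diamond> Y) \<diamond> X))),
     (-1/12, Some ((X \<diamond> X) \<diamond> (X \<diamond> Y))),
     (1/12, Some ((X \<diamond> X) \<diamond> (Y \<diamond> X))),
     (1/4, Some ((X \<diamond> X) \<diamond> (Y \<diamond> Y))),
     (-5/24, Some ((X \<diamond> Y) \<diamond> (X \<diamond> Y))),
     (5/24, Some ((X \<diamond> Y) \<diamond> (Y \<diamond> X))),
     (1/24, Some ((X \<diamond> (X \<diamond> Y)) \<diamond> X)),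
     (1/24, Some ((X \<diamond> (X \<diamond> Y)) \<diamond> Y)),
     (-1/24, Some ((X \<diamond> (Y \<diamond> X)) \<diamond> X)),
     (-1/24, Some ((X \<diamond> (Y \<diamond> X)) \<diamond> Y)),
     (-1/4, Some ((X \<diamond> (Y \<diamond> Y)) \<diamond> X)),
     (-1/4, Some ((X \<diamond> (Y \<diamond> Y)) \<diamond> Y)),
     (1/24, Some ((Y \<diamond> X) \<diamond> (X \<diamond> Y))),
     (-1/24, Some ((Y \<diamond> X) \<diamond> (Y \<diamond> X))),
     (-1/12, Some ((Y \<diamond> Y) \<diamond> (X \<diamond> Y))),
     (1/12, Some ((Y \<diamond> Y) \<diamond> (Y \<diamond> X))),
     (1/24, Some ((Y \<diamond> (X \<diamond> Y)) \<diamond> X)),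
     (1/24, Some ((Y \<diamond> (X \<diamond> Y)) \<diamond> Y)),
     (-1/24, Some ((Y \<diamond> (Y \<diamond> X)) \<diamond> X)),
     (-1/24, Some ((Y \<diamond> (Y \<diamond> X)) \<diamond> Y)),
     (1/8, Some (((X \<diamond> X) \<diamond> X) \<diamond> Y)),
     (-5/24, Some (((X \<diamond> X) \<diamond> Y) \<diamond> X)),
     (-5/24, Some (((X \<diamond> X) \<diamond> Y) \<diamond> Y)),
     (1/12, Some (((X \<diamond> Y) \<diamond> X) \<diamond> X)),
     (1/12, Some (((X \<diamond> Y) \<diamond> X) \<diamond> Y)),
     (1/12, Some (((X \<diamond> Y) \<diamond> Y) \<diamond> X)),
     (1/12, Some (((X \<diamond> Y) \<diamond> Y) \<diamond> Y)),
     (1/24, Some (((Y \<diamond> Y) \<diamond> X) \<diamond> X)),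
     (1/24, Some (((Y \<diamond> Y) \<diamond> X) \<diamond> Y)),
     (-1/24, Some (((Y \<diamond> Y) \<diamond> Y) \<diamond> X))]"

lemma series_of_bch4_None: "series_of bch4 None = 0"
  by (simp add: bch4_def series_of_def)

lemma sX_eq_series_of: "sX = series_of [(1, Some X)]"
  by (simp add: sX_def sgen_eq_series_of)

lemma sY_eq_series_of: "sY = series_of [(1, Some Y)]"
  by (simp add: sY_def sgen_eq_series_of)

lemma exp_bch4_computation:
  "(lc_exp_upto 4 bch4 :: ('a::field_char_0, bool) lc) =
     lc_times_upto 4 (lc_exp_upto 4 [(1, Some X)]) (lc_exp_upto 4 [(1, Some Y)])"
  by (simp add: bch4_def lc_exp_upto_def lc_times_upto_def lc_nf_def lc_drop_zeros_def
      lc_scale_def upt_rec cong: if_weak_cong)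

lemma exp_bch4:
  "agree_upto 4 (exp_l (series_of bch4)) (smul (exp_l sX) (exp_l sY) :: ('a::field_char_0, bool) ser)"
proof -
  have "agree_upto 4 (exp_l (series_of bch4)) (series_of (lc_exp_upto 4 (bch4 :: ('a, bool) lc)))"
    using lc_exp_upto_agree[OF series_of_bch4_None] by (rule agree_upto_sym)
  also have "agree_upto 4 \<dots> (smul (series_of (lc_exp_upto 4 [(1, Some X)]))
      (series_of (lc_exp_upto 4 [(1, Some Y)])))"
    by (simp add: exp_bch4_computation agree_upto_def series_of_lc_times_upto)
  also have "agree_upto 4 \<dots> (smul (exp_l sX) (exp_l sY))"
    unfolding sX_eq_series_of sY_eq_series_of
    by (intro smul_agree_upto lc_exp_upto_agree) (simp_all add: series_of_def)
  finally show ?thesis .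
qed

lemmas Phi_small_cases =
  Phi_replicate[of "Suc 0" _ "Suc 0", simplified]
  Phi_replicate[of "Suc (Suc 0)" _ "Suc 0", simplified]
  Phi_replicate[of "Suc 0" _ "Suc (Suc 0)", simplified]

lemma formula_eq_bch4:
  "slin [(1, sX), (1, sY), (1/2, scomm sX sY),
      (1/12, scomm sX (scomm sX sY)), (-1/3, angle [sX] sX sY),
      (-1/12, scomm sY (scomm sX sY)), (-1/6, angle [sY] sX sY), (-1/2, Phi [sX] [sY, sY]),
      (-1/24, angle [sX] sX (scomm sX sY)), (-1/12, scomm sX (angle [sX] sX sY)),
      (-1/8, angle [sX, sX] sX sY),
      (1/24, scomm (scomm sX (scomm sX sY)) sY), (-1/24, scomm sX (angle [sY] sX sY)),
      (-1/4, Phi [sX, sX] [sY, sY]), (-1/4, scomm sX (Phi [sX] [sY, sY])),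
      (-1/24, scomm (angle [sX] sX sY) sY), (-1/24, angle [sX] (scomm sX sY) sY),
      (-1/6, angle [sX, sY] sX sY), (1/24, angle [sY, sX] sX sY),
      (1/12, scomm (Phi [sX] [sY, sY]) sY), (1/24, angle [sY] sY (scomm sX sY)),
      (-1/24, angle [sY, sY] sX sY), (-1/6, Phi [sX] [sY, sY, sY])] =
    (series_of bch4 :: ('a::field_char_0, bool) ser)"
  by (subst series_of_lc_nf[symmetric])
    (simp add: bch4_def sX_eq_series_of sY_eq_series_of Phi_small_cases angle_def scomm_def
      sassoc_def pval_single pval_two_left pval_two_right slin_Nil slin_Cons sadd_series_of
      sscale_series_of smul_series_of lc_nf_def lc_add_def lc_scale_def lc_times_def
      lc_drop_zeros_def cong: if_weak_cong)

theorem mainTheorem7: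
  fixes w :: "bool word"
  assumes "wdeg w \<le> 4"
  shows "(log_l (smul (exp_l sX) (exp_l sY)) w :: 'a :: field_char_0) =
    slin [(1, sX), (1, sY), (1/2, scomm sX sY),
      (1/12, scomm sX (scomm sX sY)), (-1/3, angle [sX] sX sY),
      (-1/12, scomm sY (scomm sX sY)), (-1/6, angle [sY] sX sY), (-1/2, Phi [sX] [sY, sY]),
      (-1/24, angle [sX] sX (scomm sX sY)), (-1/12, scomm sX (angle [sX] sX sY)),
      (-1/8, angle [sX, sX] sX sY),
      (1/24, scomm (scomm sX (scomm sX sY)) sY), (-1/24, scomm sX (angle [sY] sX sY)),
      (-1/4, Phi [sX, sX] [sY, sY]), (-1/4, scomm sX (Phi [sX] [sY, sY])),
      (-1/24, scomm (angle [sX] sX sY) sY), (-1/24, angle [sX] (scomm sX sY) sY),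
      (-1/6, angle [sX, sY] sX sY), (1/24, angle [sY, sX] sX sY),
      (1/12, scomm (Phi [sX] [sY, sY]) sY), (1/24, angle [sY] sY (scomm sX sY)),
      (-1/24, angle [sY, sY] sX sY), (-1/6, Phi [sX] [sY, sY, sY])]
    w"
proof -
  let ?g = "smul (exp_l sX) (exp_l sY) :: ('a, bool) ser"
  have g_None: "?g None = 1"
    by (simp add: smul_apply exp_l_def sone_def)
  have "agree_upto 4 (log_l ?g) (series_of bch4)"
    using log_l_agree_upto[OF g_None series_of_bch4_None exp_bch4] .
  then show ?thesis
    unfolding formula_eq_bch4 using assms by (simp add: agree_upto_def)
qed

end
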